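(* Let $\rho$ be a primitive $k$th root of unity, $0\le a\le k-1$, $L\in\mathbb Z_{\ge1}$, $\delta>0$, $C>0$. For all $N\ge1$ and $z$ with $\mathrm{Re}(z)\le-\delta$, $|z|\le C$, $$-\chi_a(-z,N)=\sum_{\ell=0}^{L}\frac{(-1)^\ell}{\ell!}\Big(\frac{kz}{N}\Big)^{\ell-1}B_\ell(a/k)\,\mathrm{Li}_{2-\ell}(\rho^{-a}e^{z})+O\Big(\frac1{N^L}\Big),$$ with implied constant depending only on $L,k,\delta,C$.
   Context: For $\mathrm{Re}(w)>0$, $\chi_a(w,N):=\sum_{r\ge1}\frac{\rho^{-ra}}{r}\frac{e^{-rw}e^{raw/N}}{e^{krw/N}-1}$. Bernoulli polynomials: $ze^{\lambda z}/(e^z-1)=\sum B_n(\lambda)z^n/n!$. Polylogarithms $\mathrm{Li}_s(u)=\sum_{n\ge1}u^n/n^s$ for $|u|<1$. *)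

theory Defs
  imports "HOL-Analysis.Analysis"
begin

definition primitive_root_of_unity :: "nat \<Rightarrow> complex \<Rightarrow> bool" where
  "primitive_root_of_unity k \<rho> \<longleftrightarrow> k \<ge> 1 \<and> \<rho> ^ k = 1 \<and> (\<forall>j. 0 < j \<and> j < k \<longrightarrow> \<rho> ^ j \<noteq> 1)"

definition bern_gen :: "complex \<Rightarrow> complex \<Rightarrow> complex" where
  "bern_gen lam z = (if z = 0 then 1 else z * exp (lam * z) / (exp z - 1))"

text \<open>Bernoulli polynomials: B_n(lambda) = n-th derivative at 0 of the generating function,
  i.e. z e^(lambda z)/(e^z-1) = sum B_n(lambda) z^n / n!.\<close>
definition bernpoly :: "nat \<Rightarrow> complex \<Rightarrow> complex" where
  "bernpoly n lam = (deriv ^^ n) (bern_gen lam) 0"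

text \<open>Polylogarithm Li_s(u) = sum_{n>=1} u^n / n^s (integer order s, used for abs u < 1).\<close>
definition polylog :: "int \<Rightarrow> complex \<Rightarrow> complex" where
  "polylog s u = (\<Sum>n. u ^ Suc n / (of_nat (Suc n)) powi s)"

definition chi :: "nat \<Rightarrow> complex \<Rightarrow> nat \<Rightarrow> complex \<Rightarrow> nat \<Rightarrow> complex" where
  "chi k \<rho> a w N = (\<Sum>r. (let r' = of_nat (Suc r) :: complex in
      \<rho> powi (- (int (Suc r) * int a)) / r' * exp (- r' * w) * exp (r' * of_nat a * w / of_nat N)
        / (exp (of_nat k * r' * w / of_nat N) - 1)))"

end

theory Submission
  imports Defs "HOL-Complex_Analysis.Complex_Analysis"
begin

text \<open>Write G(lam, s) = s e^(lam s) / (e^s - 1) for the generating function of the Bernoulli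
  polynomials, lam = a/k, t = kz/N and u = rho^(-a) e^z. Then chi_a(-z, N) is the series
  sum_r u^r/r * G(lam, -rt)/(-rt), and replacing G(lam, -) by its Taylor polynomial of degree L
  turns this series, once the finite sum over the Taylor coefficients is taken inside, into minus the
  polylogarithm expansion. All points -rt lie in the sector Re s >= (delta/C)|s|, where the Taylor
  remainder is O(|s|^(L+1)): near 0 by Cauchy's estimates, and far from 0 because there
  |G(lam, s)| <= (1 + 4C/delta)|s| as long as lam <= 1. Since |u| <= e^(-delta), the total error is
  at most a constant times |t|^L * sum_r r^(L-1) e^(-delta r), which is O(N^(-L)).\<close>

lemma summable_of_nat_power_mult_power:
  fixes x :: real
  assumes "\<bar>x\<bar> < 1"
  shows "summable (\<lambda>n. real n ^ m * x ^ n)"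
  using assms
proof (induction m arbitrary: x)
  case 0
  then show ?case by (simp add: summable_geometric)
next
  case (Suc m)
  have "summable (\<lambda>n. diffs (\<lambda>n. real n ^ m) n * x ^ n)"
    by (rule termdiff_converges[where K = 1]) (use Suc in auto)
  then have "summable (\<lambda>n. x * (diffs (\<lambda>n. real n ^ m) n * x ^ n))"
    by (rule summable_mult)
  then have "summable (\<lambda>n. real (Suc n) ^ Suc m * x ^ Suc n)"
    by (simp add: diffs_def mult_ac)
  then show ?case by (rule summable_Suc_iff[THEN iffD1])
qed

lemma summable_Suc_power_mult_power:
  fixes x :: real
  assumes "\<bar>x\<bar> < 1"
  shows "summable (\<lambda>n. real (Suc n) ^ m * x ^ Suc n)"
  using summable_of_nat_power_mult_power[OF assms] by (rule summable_Suc_iff[THEN iffD2])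

lemma polylog_summable:
  fixes u :: complex
  assumes "cmod u < 1"
  shows "summable (\<lambda>n. u ^ Suc n / of_nat (Suc n) powi s)"
proof (rule summable_norm_cancel, rule summable_comparison_test)
  show "summable (\<lambda>n. real (Suc n) ^ nat (- s) * cmod u ^ Suc n)"
    by (rule summable_Suc_power_mult_power) (use assms in simp)
  show "\<exists>N. \<forall>n\<ge>N. norm (norm (u ^ Suc n / of_nat (Suc n) powi s))
          \<le> real (Suc n) ^ nat (- s) * cmod u ^ Suc n"
  proof (intro exI allI impI)
    fix n :: nat
    have "1 / real (Suc n) powi s \<le> real (Suc n) ^ nat (- s)"
      by (cases "s \<ge> 0") (auto simp: power_int_def field_simps one_le_power simp del: of_nat_Suc)
    then have "cmod u ^ Suc n * (1 / real (Suc n) powi s) \<le> cmod u ^ Suc n * real (Suc n) ^ nat (- s)"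
      by (rule mult_left_mono) simp
    then show "norm (norm (u ^ Suc n / of_nat (Suc n) powi s)) \<le> real (Suc n) ^ nat (- s) * cmod u ^ Suc n"
      by (simp add: norm_divide norm_mult norm_power norm_power_int mult.commute del: of_nat_Suc power_Suc)
  qed
qed

lemma exp_neq_1_if_norm_less_1:
  fixes z :: complex
  assumes "z \<noteq> 0" "cmod z < 1"
  shows "exp z \<noteq> 1"
proof
  assume "exp z = 1"
  then obtain n :: int where re: "Re z = 0" and im: "Im z = of_int (2 * n) * pi"
    by (auto simp: exp_eq_1)
  have "n \<noteq> 0" using assms(1) re im by (auto simp: complex_eq_iff)
  then have "\<bar>Im z\<bar> \<ge> 2 * pi" using im by (auto simp: abs_mult)
  moreover have "\<bar>Im z\<bar> \<le> cmod z" by (rule abs_Im_le_cmod)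
  ultimately show False using assms(2) pi_gt3 by linarith
qed

lemma bern_gen_tendsto_1: "(bern_gen lam \<longlongrightarrow> 1) (at 0)"
proof -
  have "((\<lambda>y. exp (lam * y) / ((exp y - exp 0) / (y - 0))) \<longlongrightarrow> 1 / 1) (at 0)"
  proof (rule tendsto_divide)
    show "((\<lambda>y. exp (lam * y)) \<longlongrightarrow> 1) (at 0)"
      by (rule tendsto_eq_intros refl | simp)+
    show "((\<lambda>y. (exp y - exp 0) / (y - 0)) \<longlongrightarrow> (1::complex)) (at 0)"
      using DERIV_exp[of "0::complex"] unfolding has_field_derivative_iff by simp
  qed simp
  moreover have "eventually (\<lambda>y. exp (lam * y) / ((exp y - exp 0) / (y - 0)) = bern_gen lam y) (at 0)"
    unfolding eventually_at_filter by (auto simp: bern_gen_def)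
  ultimately show ?thesis by (simp add: tendsto_cong)
qed

lemma bern_gen_holomorphic_on_ball: "bern_gen lam holomorphic_on ball 0 1"
proof (rule no_isolated_singularity'[where K = "{0}"])
  show "(bern_gen lam \<longlongrightarrow> bern_gen lam z) (at z within ball 0 1)" if "z \<in> {0}" for z
    using that bern_gen_tendsto_1[of lam] by (auto simp: bern_gen_def intro: tendsto_within_subset)
  have "(\<lambda>z. z * exp (lam * z) / (exp z - 1)) holomorphic_on (ball 0 1 - {0})"
    by (intro holomorphic_intros) (auto dest: exp_neq_1_if_norm_less_1)
  then show "bern_gen lam holomorphic_on (ball 0 1 - {0})"
    by (rule holomorphic_transform) (auto simp: bern_gen_def)
qed auto

definition bern_taylor :: "nat \<Rightarrow> complex \<Rightarrow> complex \<Rightarrow> complex" where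
  "bern_taylor L lam s = (\<Sum>n\<le>L. bernpoly n lam / fact n * s ^ n)"

lemma bernpoly_over_fact_bound: "\<exists>B\<ge>0. \<forall>n. cmod (bernpoly n lam / fact n) \<le> B * 2 ^ n"
proof -
  have hol: "bern_gen lam holomorphic_on ball 0 1" by (rule bern_gen_holomorphic_on_ball)
  have cont: "continuous_on (cball 0 (1/2)) (bern_gen lam)"
    by (rule holomorphic_on_imp_continuous_on, rule holomorphic_on_subset[OF hol]) auto
  obtain B where B: "\<And>x. x \<in> cball 0 (1/2) \<Longrightarrow> cmod (bern_gen lam x) \<le> B"
    using compact_imp_bounded[OF compact_continuous_image[OF cont compact_cball]]
    unfolding bounded_iff by (metis (no_types, lifting) image_eqI)
  have "cmod (bernpoly n lam / fact n) \<le> B * 2 ^ n" for n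
  proof -
    have "cmod ((deriv ^^ n) (bern_gen lam) 0) \<le> fact n * B / (1/2) ^ n"
      by (rule Cauchy_inequality[OF holomorphic_on_subset[OF hol] cont])
         (auto intro!: B simp: dist_norm)
    then show ?thesis
      by (simp add: bernpoly_def norm_divide field_simps power_divide)
  qed
  moreover have "B \<ge> 0" using B[of 0] by (auto intro: order_trans[OF norm_ge_zero])
  ultimately show ?thesis by blast
qed

lemma bern_gen_minus_taylor_small:
  "\<exists>K\<ge>0. \<forall>s. cmod s \<le> 1/4 \<longrightarrow> cmod (bern_gen lam s - bern_taylor L lam s) \<le> K * cmod s ^ (L+1)"
proof -
  obtain B where B0: "B \<ge> 0" and B: "\<And>n. cmod (bernpoly n lam / fact n) \<le> B * 2 ^ n"
    using bernpoly_over_fact_bound by blast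
  show ?thesis
  proof (intro exI[of _ "B * 2 ^ (L+2)"] conjI allI impI)
    show "B * 2 ^ (L+2) \<ge> 0" using B0 by simp
    fix s :: complex assume s: "cmod s \<le> 1/4"
    have "(\<lambda>n. bernpoly n lam / fact n * s ^ n) sums bern_gen lam s"
      using holomorphic_power_series[OF bern_gen_holomorphic_on_ball, of s] s
      by (simp add: bernpoly_def)
    from sums_split_initial_segment[OF this, of "Suc L"]
    have tail: "(\<lambda>i. bernpoly (i + Suc L) lam / fact (i + Suc L) * s ^ (i + Suc L)) sums
               (bern_gen lam s - bern_taylor L lam s)"
      by (simp add: bern_taylor_def lessThan_Suc_atMost)
    define A where "A = B * 2 ^ Suc L * cmod s ^ Suc L"
    have bound: "norm (bernpoly (i + Suc L) lam / fact (i + Suc L) * s ^ (i + Suc L)) \<le> A * (1/2) ^ i" for i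
    proof -
      have "norm (bernpoly (i + Suc L) lam / fact (i + Suc L) * s ^ (i + Suc L))
          \<le> B * 2 ^ (i + Suc L) * cmod s ^ (i + Suc L)"
        unfolding norm_mult norm_power by (rule mult_right_mono[OF B]) simp
      also have "\<dots> = A * (2 * cmod s) ^ i" by (simp add: A_def power_add power_mult_distrib)
      also have "\<dots> \<le> A * (1/2) ^ i"
        by (rule mult_left_mono, rule power_mono) (use s B0 in \<open>auto simp: A_def\<close>)
      finally show ?thesis .
    qed
    have geom: "(\<lambda>i. A * (1/2) ^ i) sums (A * 2)"
      using sums_mult[OF geometric_sums[of "1/2::real"], of A] by simp
    have "cmod (bern_gen lam s - bern_taylor L lam s) \<le> A * 2"
      using norm_suminf_le[OF bound sums_summable[OF geom]] sums_unique[OF tail] sums_unique[OF geom]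
      by simp
    then show "cmod (bern_gen lam s - bern_taylor L lam s) \<le> B * 2 ^ (L+2) * cmod s ^ (L+1)"
      by (simp add: A_def)
  qed
qed

lemma power_le_scaled_power:
  fixes y :: real
  assumes "y \<ge> 1/4" and "n \<le> m"
  shows "y ^ n \<le> 4 ^ m * y ^ m"
proof -
  have "y ^ n \<le> (4 * y) ^ n" using assms(1) by (intro power_mono) auto
  also have "\<dots> \<le> (4 * y) ^ m" using assms by (intro power_increasing) auto
  finally show ?thesis by (simp add: power_mult_distrib)
qed

lemma norm_bern_gen_le_in_sector:
  fixes l c :: real and s :: complex
  assumes c: "c > 0" and l: "l \<le> 1" and sector: "Re s \<ge> c * cmod s" and large: "cmod s \<ge> 1/4"
  shows "cmod (bern_gen (of_real l) s) \<le> (1 + 4 / c) * cmod s"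
proof -
  define x where "x = Re s"
  have "c * (1/4) \<le> c * cmod s" by (rule mult_left_mono[OF large]) (use c in simp)
  then have x: "x \<ge> c / 4" using sector unfolding x_def by simp
  have x0: "x > 0" using x c by simp
  have exp_x: "exp x - 1 \<ge> x" using exp_ge_add_one_self[of x] by linarith
  have num: "cmod (exp (of_real l * s)) \<le> exp x"
    using l x0 by (simp add: x_def mult_right_mono[of l 1 "Re s"] less_imp_le)
  have denom: "cmod (exp s - 1) \<ge> exp x - 1"
    using norm_triangle_ineq2[of "exp s" 1] by (simp add: x_def)
  have "exp x / (exp x - 1) = 1 + 1 / (exp x - 1)" using exp_x x0 by (simp add: field_simps)
  also have "\<dots> \<le> 1 + 1 / x" using exp_x x0 by (simp add: divide_left_mono)
  also have "\<dots> \<le> 1 + 4 / c" using x c x0 by (simp add: field_simps)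
  finally have ratio: "exp x / (exp x - 1) \<le> 1 + 4 / c" .
  have "s \<noteq> 0" using large by auto
  then have "cmod (bern_gen (of_real l) s) = cmod s * cmod (exp (of_real l * s)) / cmod (exp s - 1)"
    by (simp add: bern_gen_def norm_divide norm_mult)
  also have "\<dots> \<le> cmod s * (exp x / (exp x - 1))"
    using num denom exp_x x0 by (simp only: times_divide_eq_right) (intro frac_le mult_left_mono; simp)
  also have "\<dots> \<le> cmod s * (1 + 4 / c)" by (rule mult_left_mono[OF ratio]) simp
  finally show ?thesis by (simp add: mult.commute)
qed

lemma bern_gen_minus_taylor_in_sector:
  fixes l c :: real
  assumes c: "c > 0" and l: "l \<le> 1"
  shows "\<exists>K\<ge>0. \<forall>s. Re s \<ge> c * cmod s \<longrightarrow>
     cmod (bern_gen (of_real l) s - bern_taylor L (of_real l) s) \<le> K * cmod s ^ (L+1)"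
proof -
  obtain K1 where K1: "K1 \<ge> 0" and small: "\<And>s. cmod s \<le> 1/4 \<Longrightarrow>
     cmod (bern_gen (of_real l) s - bern_taylor L (of_real l) s) \<le> K1 * cmod s ^ (L+1)"
    using bern_gen_minus_taylor_small by blast
  define A where "A = (\<Sum>n\<le>L. cmod (bernpoly n (of_real l) / fact n))"
  define K2 where "K2 = (1 + 4 / c + A) * 4 ^ (L+1)"
  have K2: "K2 \<ge> 0" unfolding K2_def A_def using c by (intro mult_nonneg_nonneg add_nonneg_nonneg sum_nonneg) auto
  have large: "cmod (bern_gen (of_real l) s - bern_taylor L (of_real l) s) \<le> K2 * cmod s ^ (L+1)"
    if sector: "Re s \<ge> c * cmod s" and s: "cmod s \<ge> 1/4" for s
  proof -
    have "cmod (bern_gen (of_real l) s) \<le> (1 + 4 / c) * cmod s"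
      by (rule norm_bern_gen_le_in_sector[OF c l sector s])
    also have "\<dots> \<le> (1 + 4 / c) * (4 ^ (L+1) * cmod s ^ (L+1))"
      using power_le_scaled_power[OF s, of 1 "L+1"] c by (intro mult_left_mono) auto
    finally have gen: "cmod (bern_gen (of_real l) s) \<le> (1 + 4 / c) * (4 ^ (L+1) * cmod s ^ (L+1))" .
    have "cmod (bern_taylor L (of_real l) s) \<le> (\<Sum>n\<le>L. cmod (bernpoly n (of_real l) / fact n) * cmod s ^ n)"
      unfolding bern_taylor_def
      by (rule order_trans[OF norm_sum], rule sum_mono) (simp add: norm_mult norm_power norm_divide)
    also have "\<dots> \<le> (\<Sum>n\<le>L. cmod (bernpoly n (of_real l) / fact n) * (4 ^ (L+1) * cmod s ^ (L+1)))"
      by (intro sum_mono mult_left_mono power_le_scaled_power[OF s]) auto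
    also have "\<dots> = A * (4 ^ (L+1) * cmod s ^ (L+1))"
      by (simp add: A_def sum_distrib_right)
    finally have taylor: "cmod (bern_taylor L (of_real l) s) \<le> A * (4 ^ (L+1) * cmod s ^ (L+1))" .
    have "cmod (bern_gen (of_real l) s - bern_taylor L (of_real l) s)
        \<le> cmod (bern_gen (of_real l) s) + cmod (bern_taylor L (of_real l) s)"
      by (rule norm_triangle_ineq4)
    also have "\<dots> \<le> K2 * cmod s ^ (L+1)" using gen taylor by (simp add: K2_def algebra_simps)
    finally show ?thesis .
  qed
  have "cmod (bern_gen (of_real l) s - bern_taylor L (of_real l) s) \<le> (K1 + K2) * cmod s ^ (L+1)"
    if sector: "Re s \<ge> c * cmod s" for s
  proof -
    have "max K1 K2 \<le> K1 + K2" using K1 K2 by simp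
    moreover have "cmod (bern_gen (of_real l) s - bern_taylor L (of_real l) s) \<le> max K1 K2 * cmod s ^ (L+1)"
      using small large[OF sector] by (cases "cmod s \<le> 1/4") (force intro: order_trans mult_right_mono)+
    ultimately show ?thesis by (meson mult_right_mono norm_ge_zero order_trans zero_le_power)
  qed
  then show ?thesis using K1 K2 by (intro exI[of _ "K1 + K2"]) auto
qed

lemma bern_gen_minus_taylor_in_sector_uniform:
  fixes c :: real
  assumes "c > 0"
  shows "\<exists>K\<ge>0. \<forall>a<k. \<forall>s. Re s \<ge> c * cmod s \<longrightarrow>
     cmod (bern_gen (of_nat a / of_nat k) s - bern_taylor L (of_nat a / of_nat k) s) \<le> K * cmod s ^ (L+1)"
proof -
  have "\<forall>a. \<exists>K\<ge>0. a < k \<longrightarrow> (\<forall>s. Re s \<ge> c * cmod s \<longrightarrow>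
     cmod (bern_gen (of_nat a / of_nat k) s - bern_taylor L (of_nat a / of_nat k) s) \<le> K * cmod s ^ (L+1))"
  proof
    fix a
    show "\<exists>K\<ge>0. a < k \<longrightarrow> (\<forall>s. Re s \<ge> c * cmod s \<longrightarrow>
      cmod (bern_gen (of_nat a / of_nat k) s - bern_taylor L (of_nat a / of_nat k) s) \<le> K * cmod s ^ (L+1))"
    proof (cases "a < k")
      case True
      then have "real a / real k \<le> 1" by simp
      from bern_gen_minus_taylor_in_sector[OF assms this, of L] show ?thesis by (simp; blast)
    qed auto
  qed
  then obtain Ka where Ka0: "\<And>a. Ka a \<ge> 0" and Ka: "\<And>a s. a < k \<Longrightarrow> Re s \<ge> c * cmod s \<Longrightarrow>
     cmod (bern_gen (of_nat a / of_nat k) s - bern_taylor L (of_nat a / of_nat k) s) \<le> Ka a * cmod s ^ (L+1)"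
    by metis
  have "Ka a * cmod s ^ (L+1) \<le> (\<Sum>a<k. Ka a) * cmod s ^ (L+1)" if "a < k" for a s
    using that Ka0 by (intro mult_right_mono member_le_sum) auto
  then show ?thesis using Ka Ka0
    by (intro exI[of _ "\<Sum>a<k. Ka a"]) (meson order_trans sum_nonneg)
qed

lemma norm_primitive_root_of_unity:
  assumes "primitive_root_of_unity k \<rho>"
  shows "cmod \<rho> = 1"
proof -
  have "cmod \<rho> ^ k = 1" using assms by (simp add: primitive_root_of_unity_def flip: norm_power)
  then show ?thesis using assms power_eq_imp_eq_base[of "cmod \<rho>" k 1]
    by (simp add: primitive_root_of_unity_def)
qed

text \<open>Term r is the term r + 1 of sum_r u^r/r * F(-rt)/(-rt) from the header. Since x/0 = 0, all
  terms vanish for t = 0, just as the summands of chi do for z = 0.\<close>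

definition bern_series_term :: "(complex \<Rightarrow> complex) \<Rightarrow> complex \<Rightarrow> complex \<Rightarrow> nat \<Rightarrow> complex" where
  "bern_series_term F u t r =
     u ^ Suc r / of_nat (Suc r) * (F (- of_nat (Suc r) * t) / (- of_nat (Suc r) * t))"

lemma chi_eq_suminf_bern_series:
  assumes "k \<ge> 1" "N \<ge> 1"
  shows "chi k \<rho> a (- z) N = suminf (bern_series_term (bern_gen (of_nat a / of_nat k))
                                  (\<rho> powi (- int a) * exp z) (of_nat k * z / of_nat N))"
  unfolding chi_def
proof (intro suminf_cong)
  fix r
  define s where "s = - of_nat (Suc r) * (of_nat k * z / of_nat N)"
  have rho: "\<rho> powi (- (int (Suc r) * int a)) = (\<rho> powi (- int a)) ^ Suc r"
    by (metis mult.commute mult_minus_left power_int_mult power_int_of_nat)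
  have arg: "- of_nat (Suc r) * - z = of_nat (Suc r) * z"
    "of_nat (Suc r) * of_nat a * - z / of_nat N = of_nat a / of_nat k * s"
    "of_nat k * of_nat (Suc r) * - z / of_nat N = s"
    using assms by (simp_all add: s_def field_simps)
  have gen: "bern_gen (of_nat a / of_nat k) s / s = exp (of_nat a / of_nat k * s) / (exp s - 1)"
    by (cases "s = 0") (simp_all add: bern_gen_def)
  show "(let r' = of_nat (Suc r) in \<rho> powi (- (int (Suc r) * int a)) / r' * exp (- r' * - z)
        * exp (r' * of_nat a * - z / of_nat N) / (exp (of_nat k * r' * - z / of_nat N) - 1))
      = bern_series_term (bern_gen (of_nat a / of_nat k)) (\<rho> powi (- int a) * exp z) (of_nat k * z / of_nat N) r"
    unfolding Let_def arg bern_series_term_def s_def[symmetric] gen rho exp_of_nat_mult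
    by (simp add: power_mult_distrib)
qed

lemma bern_series_taylor_sums:
  assumes u: "cmod u < 1" and t: "t \<noteq> 0"
  shows "bern_series_term (bern_taylor L lam) u t sums
           - (\<Sum>l\<le>L. (-1) ^ l / of_nat (fact l) * t powi (int l - 1) * bernpoly l lam
                 * polylog (2 - int l) u)"
proof -
  define c where "c l = (-1) ^ l / of_nat (fact l) * t powi (int l - 1) * bernpoly l lam" for l
  have summand: "c l * (u ^ Suc r / of_nat (Suc r) powi (2 - int l))
      = - (u ^ Suc r / of_nat (Suc r) * (bernpoly l lam / fact l * (- of_nat (Suc r) * t) ^ l
           / (- of_nat (Suc r) * t)))" for l r
  proof -
    have t_powi: "t powi (int l - 1) = t ^ l / t" using t by (simp add: power_int_diff)
    have r_powi: "(of_nat (Suc r) :: complex) powi (2 - int l) = of_nat (Suc r) ^ 2 / of_nat (Suc r) ^ l"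
      by (simp add: power_int_diff del: of_nat_Suc)
    show ?thesis unfolding c_def t_powi r_powi using t
      by (simp add: field_simps power_mult_distrib power2_eq_square power_minus[of "t * of_nat (Suc r)"]
          del: of_nat_Suc)
  qed
  have "(\<lambda>r. u ^ Suc r / of_nat (Suc r) powi (2 - int l)) sums polylog (2 - int l) u" for l
    unfolding polylog_def by (rule summable_sums[OF polylog_summable[OF u]])
  then have "(\<lambda>r. \<Sum>l\<le>L. c l * (u ^ Suc r / of_nat (Suc r) powi (2 - int l)))
      sums (\<Sum>l\<le>L. c l * polylog (2 - int l) u)"
    by (intro sums_sum sums_mult)
  moreover have "(\<Sum>l\<le>L. c l * (u ^ Suc r / of_nat (Suc r) powi (2 - int l)))
      = - bern_series_term (bern_taylor L lam) u t r" for r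
    unfolding summand sum_negf bern_series_term_def bern_taylor_def
    by (simp only: sum_divide_distrib sum_distrib_left)
  ultimately have "(\<lambda>r. - bern_series_term (bern_taylor L lam) u t r)
      sums (\<Sum>l\<le>L. c l * polylog (2 - int l) u)"
    by simp
  from sums_minus[OF this] show ?thesis by (simp add: c_def)
qed

lemma norm_suminf_bern_series_diff_le:
  fixes F P :: "complex \<Rightarrow> complex"
  assumes u: "cmod u \<le> x" "x < 1" and L: "L \<ge> 1" and K: "K \<ge> 0"
    and remainder: "\<And>r. cmod (F (- of_nat (Suc r) * t) - P (- of_nat (Suc r) * t))
                         \<le> K * cmod (- of_nat (Suc r) * t) ^ (L+1)"
    and P: "summable (bern_series_term P u t)"
  shows "cmod (suminf (bern_series_term F u t) - suminf (bern_series_term P u t))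
           \<le> K * cmod t ^ L * (\<Sum>r. real (Suc r) ^ (L - 1) * x ^ Suc r)"
proof -
  define d where "d r = bern_series_term F u t r - bern_series_term P u t r" for r
  define b where "b r = K * cmod t ^ L * (real (Suc r) ^ (L - 1) * x ^ Suc r)" for r
  have x0: "x \<ge> 0" using u(1) norm_ge_zero order_trans by blast
  have S: "summable (\<lambda>r. real (Suc r) ^ (L - 1) * x ^ Suc r)"
    by (rule summable_Suc_power_mult_power) (use u x0 in simp)
  then have b: "summable b" unfolding b_def by (rule summable_mult)
  have d_le: "cmod (d r) \<le> b r" for r
  proof (cases "t = 0")
    case True
    then show ?thesis using K x0 L by (simp add: d_def b_def bern_series_term_def)
  next
    case False
    define s where "s = - of_nat (Suc r) * t"
    have s: "cmod s = real (Suc r) * cmod t" "s \<noteq> 0"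
      using False by (simp_all add: s_def norm_mult del: of_nat_Suc)
    have "d r = u ^ Suc r / of_nat (Suc r) * ((F s - P s) / s)"
      by (simp add: d_def bern_series_term_def s_def diff_divide_distrib right_diff_distrib)
    then have "cmod (d r) = cmod u ^ Suc r / real (Suc r) * (cmod (F s - P s) / cmod s)"
      by (simp add: norm_mult norm_divide norm_power del: of_nat_Suc)
    also have "\<dots> \<le> x ^ Suc r / real (Suc r) * (K * cmod s ^ (L+1) / cmod s)"
      using remainder[of r] u x0 by (intro mult_mono divide_right_mono power_mono)
        (auto simp: s_def simp del: of_nat_Suc)
    also have "\<dots> = x ^ Suc r * K * cmod t ^ L * (real (Suc r) ^ L / real (Suc r))"
      using s False L by (simp add: power_mult_distrib del: of_nat_Suc)
    also have "\<dots> = b r"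
      using L by (cases L) (simp_all add: b_def del: of_nat_Suc)
    finally show ?thesis .
  qed
  have d: "summable d" by (rule summable_comparison_test'[OF b d_le])
  have "bern_series_term F u t = (\<lambda>r. d r + bern_series_term P u t r)" by (simp add: d_def)
  then have "summable (bern_series_term F u t)" using d P by (simp add: summable_add)
  then have "suminf (bern_series_term F u t) - suminf (bern_series_term P u t) = suminf d"
    unfolding d_def using P by (simp add: suminf_diff)
  also have "cmod \<dots> \<le> suminf b" by (rule norm_suminf_le[OF d_le b])
  also have "\<dots> = K * cmod t ^ L * (\<Sum>r. real (Suc r) ^ (L - 1) * x ^ Suc r)"
    unfolding b_def by (rule suminf_mult[OF S])
  finally show "cmod (suminf (bern_series_term F u t) - suminf (bern_series_term P u t))
           \<le> K * cmod t ^ L * (\<Sum>r. real (Suc r) ^ (L - 1) * x ^ Suc r)" .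
qed

lemma sector_scaled_left_half_plane:
  fixes z :: complex and \<delta> C a :: real
  assumes "Re z \<le> - \<delta>" "cmod z \<le> C" "\<delta> \<ge> 0" "C > 0" "a \<ge> 0"
  shows "Re (- of_real a * z) \<ge> \<delta> / C * cmod (- of_real a * z)"
proof -
  have "\<delta> / C * cmod (- of_real a * z) = a * (\<delta> * (cmod z / C))"
    using assms by (simp add: norm_mult)
  also have "\<dots> \<le> a * (- Re z * 1)"
    using assms by (intro mult_left_mono mult_mono) (auto simp: divide_le_eq_1 intro: order_trans[OF _ abs_Re_le_cmod])
  also have "\<dots> = Re (- of_real a * z)" by simp
  finally show ?thesis .
qed

lemma norm_chi_expansion_error_le:
  fixes k L a N :: nat and \<delta> C K :: real and \<rho> z :: complex
  assumes k: "k \<ge> 1" and L: "L \<ge> 1" and \<delta>: "\<delta> > 0" and C: "C > 0" and K: "K \<ge> 0"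
    and remainder: "\<And>s. Re s \<ge> \<delta> / C * cmod s \<Longrightarrow>
       cmod (bern_gen (of_nat a / of_nat k) s - bern_taylor L (of_nat a / of_nat k) s) \<le> K * cmod s ^ (L+1)"
    and \<rho>: "primitive_root_of_unity k \<rho>" and N: "N \<ge> 1" and zr: "Re z \<le> - \<delta>" and zC: "cmod z \<le> C"
  shows "cmod (- chi k \<rho> a (- z) N
       - (\<Sum>l\<le>L. (-1) ^ l / of_nat (fact l) * (of_nat k * z / of_nat N) powi (int l - 1)
              * bernpoly l (of_nat a / of_nat k) * polylog (2 - int l) (\<rho> powi (- int a) * exp z)))
    \<le> K * (real k * C) ^ L * (\<Sum>r. real (Suc r) ^ (L - 1) * exp (- \<delta>) ^ Suc r) / real N ^ L"
proof -
  define lam where "lam = (of_nat a / of_nat k :: complex)"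
  define t where "t = of_nat k * z / of_nat N"
  define u where "u = \<rho> powi (- int a) * exp z"
  define E where "E = (\<Sum>l\<le>L. (-1) ^ l / of_nat (fact l) * t powi (int l - 1) * bernpoly l lam
                         * polylog (2 - int l) u)"
  have u: "cmod u \<le> exp (- \<delta>)"
    using zr norm_primitive_root_of_unity[OF \<rho>] by (simp add: u_def norm_mult norm_power_int)
  have t: "t \<noteq> 0" "cmod t \<le> real k * C / real N"
    using k N zr zC \<delta> by (auto simp: t_def norm_mult norm_divide divide_right_mono)
  have "exp (- \<delta>) < 1" using \<delta> by simp
  then have P: "bern_series_term (bern_taylor L lam) u t sums - E"
    unfolding E_def by (intro bern_series_taylor_sums t order_le_less_trans[OF u])
  have scale: "- of_nat (Suc r) * t = - of_real (real (Suc r) * k / N) * z" for r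
    using N by (simp add: t_def field_simps)
  have sector: "Re (- of_nat (Suc r) * t) \<ge> \<delta> / C * cmod (- of_nat (Suc r) * t)" for r
    unfolding scale by (rule sector_scaled_left_half_plane[OF zr zC less_imp_le[OF \<delta>] C]) simp
  have "cmod (suminf (bern_series_term (bern_gen lam) u t) - suminf (bern_series_term (bern_taylor L lam) u t))
      \<le> K * cmod t ^ L * (\<Sum>r. real (Suc r) ^ (L - 1) * exp (- \<delta>) ^ Suc r)"
    by (rule norm_suminf_bern_series_diff_le[OF u _ L K remainder[OF sector, folded lam_def]
          sums_summable[OF P]]) (use \<delta> in simp)
  also have "\<dots> \<le> K * (real k * C / real N) ^ L * (\<Sum>r. real (Suc r) ^ (L - 1) * exp (- \<delta>) ^ Suc r)"
    using t K summable_Suc_power_mult_power[of "exp (- \<delta>)" "L - 1"] \<delta>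
    by (intro mult_right_mono mult_left_mono power_mono suminf_nonneg) auto
  also have "\<dots> = K * (real k * C) ^ L * (\<Sum>r. real (Suc r) ^ (L - 1) * exp (- \<delta>) ^ Suc r) / real N ^ L"
    by (simp add: power_divide)
  finally have bound: "cmod (suminf (bern_series_term (bern_gen lam) u t)
      - suminf (bern_series_term (bern_taylor L lam) u t))
      \<le> K * (real k * C) ^ L * (\<Sum>r. real (Suc r) ^ (L - 1) * exp (- \<delta>) ^ Suc r) / real N ^ L" .
  have "chi k \<rho> a (- z) N = suminf (bern_series_term (bern_gen lam) u t)"
    unfolding lam_def u_def t_def by (rule chi_eq_suminf_bern_series[OF k N])
  then have "- chi k \<rho> a (- z) N - E
      = - (suminf (bern_series_term (bern_gen lam) u t) - suminf (bern_series_term (bern_taylor L lam) u t))"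
    using sums_unique[OF P] by simp
  then show ?thesis using bound unfolding E_def lam_def t_def u_def by (simp only: norm_minus_cancel)
qed

theorem proposition4p3:
  fixes k L :: nat and \<delta> C :: real
  assumes "k \<ge> 1" and "L \<ge> 1" and "\<delta> > 0" and "C > 0"
  shows "\<exists>M::real. \<forall>\<rho> a N z.
    primitive_root_of_unity k \<rho> \<longrightarrow> a \<le> k - 1 \<longrightarrow> N \<ge> 1 \<longrightarrow> Re z \<le> - \<delta> \<longrightarrow> cmod z \<le> C \<longrightarrow>
    cmod (- chi k \<rho> a (- z) N
       - (\<Sum>l\<le>L. (-1) ^ l / of_nat (fact l) * (of_nat k * z / of_nat N) powi (int l - 1)
              * bernpoly l (of_nat a / of_nat k) * polylog (2 - int l) (\<rho> powi (- int a) * exp z)))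
    \<le> M / real N ^ L"
proof -
  obtain K where K: "K \<ge> 0" and remainder: "\<And>a s. a < k \<Longrightarrow> Re s \<ge> \<delta> / C * cmod s \<Longrightarrow>
      cmod (bern_gen (of_nat a / of_nat k) s - bern_taylor L (of_nat a / of_nat k) s) \<le> K * cmod s ^ (L+1)"
    using bern_gen_minus_taylor_in_sector_uniform[of "\<delta> / C" k L] assms by (meson divide_pos_pos)
  show ?thesis
  proof (intro exI allI impI)
    fix \<rho> z :: complex and a N :: nat
    assume "primitive_root_of_unity k \<rho>" "a \<le> k - 1" "N \<ge> 1" "Re z \<le> - \<delta>" "cmod z \<le> C"
    moreover have "a < k" using \<open>a \<le> k - 1\<close> assms(1) by linarith
    ultimately show "cmod (- chi k \<rho> a (- z) N
       - (\<Sum>l\<le>L. (-1) ^ l / of_nat (fact l) * (of_nat k * z / of_nat N) powi (int l - 1)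
              * bernpoly l (of_nat a / of_nat k) * polylog (2 - int l) (\<rho> powi (- int a) * exp z)))
      \<le> K * (real k * C) ^ L * (\<Sum>r. real (Suc r) ^ (L - 1) * exp (- \<delta>) ^ Suc r) / real N ^ L"
      using norm_chi_expansion_error_le[OF assms K remainder] by blast
  qed
qed

end
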